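(* Let $0<m\le L$ and let $(\alpha,\beta,\gamma)$ be constant parameters such that, for every $f\in\mathcal{Q}_m^L$, the spectral radius of the matrix $A$ equals $\rho=1-1/T_s\in(0,1)$. Then $$\hat J_{\max}:=\max_{\lambda\in[m,L]}\hat J(\lambda)\ge\frac{\sigma_w^2}{2(1+\rho)^2}\,T_s,\qquad \hat J_{\min}:=\min_{\lambda\in[m,L]}\hat J(\lambda)\ge\sigma_w^2 .$$
   Context: $\mathcal{Q}_m^L$ is the class of quadratic functions $f(x)=\tfrac12x^TQx-q^Tx$ on $\mathbb{R}^n$ with $Q=Q^T\succ0$ whose largest eigenvalue is $L$ and smallest is $m$. For the two-step momentum algorithm $x^{t+2}=x^{t+1}+\beta(x^{t+1}-x^t)-\alpha\nabla f\big(x^{t+1}+\gamma(x^{t+1}-x^t)\big)+\sigma_w w^t$ ($w^t$ white noise with zero mean and identity covariance, $\sigma_w\ge0$), the state matrix is $A=\begin{bmatrix}0&I\\-\beta I+\gamma\alpha Q&(1+\beta)I-(1+\gamma)\alpha Q\end{bmatrix}$. For $\lambda>0$ define $a(\lambda)=\beta-\gamma\alpha\lambda$, $b(\lambda)=(1+\gamma)\alpha\lambda-(1+\beta)$, $d(\lambda)=a(\lambda)+b(\lambda)+1$, $l(\lambda)=a(\lambda)-b(\lambda)+1$, $h(\lambda)=1-a(\lambda)$, and $\hat J(\lambda)=\dfrac{\sigma_w^2\,(d(\lambda)+l(\lambda))}{2\,d(\lambda)\,h(\lambda)\,l(\lambda)}$ (the contribution of a Hessian eigenvalue $\lambda$ to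 the steady-state variance of $x^t-x^\star$). *)

theory Defs
  imports "Jordan_Normal_Form.Spectral_Radius"
begin

definition quad_class_hessian :: "real \<Rightarrow> real \<Rightarrow> nat \<Rightarrow> real mat \<Rightarrow> bool" where
  "quad_class_hessian m L n Q \<longleftrightarrow>
     Q \<in> carrier_mat n n \<and> transpose_mat Q = Q \<and>
     (\<forall>v \<in> carrier_vec n. v \<noteq> 0\<^sub>v n \<longrightarrow> v \<bullet> (Q *\<^sub>v v) > 0) \<and>
     eigenvalue Q L \<and> (\<forall>k. eigenvalue Q k \<longrightarrow> k \<le> L) \<and>
     eigenvalue Q m \<and> (\<forall>k. eigenvalue Q k \<longrightarrow> m \<le> k)"

definition state_matrix :: "real \<Rightarrow> real \<Rightarrow> real \<Rightarrow> nat \<Rightarrow> real mat \<Rightarrow> real mat" where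
  "state_matrix \<alpha> \<beta> \<gamma> n Q =
     four_block_mat (0\<^sub>m n n) (1\<^sub>m n)
       ((- \<beta>) \<cdot>\<^sub>m 1\<^sub>m n + (\<gamma> * \<alpha>) \<cdot>\<^sub>m Q)
       ((1 + \<beta>) \<cdot>\<^sub>m 1\<^sub>m n + (- ((1 + \<gamma>) * \<alpha>)) \<cdot>\<^sub>m Q)"

definition a_fun :: "real \<Rightarrow> real \<Rightarrow> real \<Rightarrow> real \<Rightarrow> real" where
  "a_fun \<alpha> \<beta> \<gamma> lam = \<beta> - \<gamma> * \<alpha> * lam"
definition b_fun :: "real \<Rightarrow> real \<Rightarrow> real \<Rightarrow> real \<Rightarrow> real" where
  "b_fun \<alpha> \<beta> \<gamma> lam = (1 + \<gamma>) * \<alpha> * lam - (1 + \<beta>)"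
definition d_fun :: "real \<Rightarrow> real \<Rightarrow> real \<Rightarrow> real \<Rightarrow> real" where
  "d_fun \<alpha> \<beta> \<gamma> lam = a_fun \<alpha> \<beta> \<gamma> lam + b_fun \<alpha> \<beta> \<gamma> lam + 1"
definition l_fun :: "real \<Rightarrow> real \<Rightarrow> real \<Rightarrow> real \<Rightarrow> real" where
  "l_fun \<alpha> \<beta> \<gamma> lam = a_fun \<alpha> \<beta> \<gamma> lam - b_fun \<alpha> \<beta> \<gamma> lam + 1"
definition h_fun :: "real \<Rightarrow> real \<Rightarrow> real \<Rightarrow> real \<Rightarrow> real" where
  "h_fun \<alpha> \<beta> \<gamma> lam = 1 - a_fun \<alpha> \<beta> \<gamma> lam"

definition J_hat :: "real \<Rightarrow> real \<Rightarrow> real \<Rightarrow> real \<Rightarrow> real \<Rightarrow> real" where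
  "J_hat \<sigma>w \<alpha> \<beta> \<gamma> lam =
     \<sigma>w\<^sup>2 * (d_fun \<alpha> \<beta> \<gamma> lam + l_fun \<alpha> \<beta> \<gamma> lam) /
     (2 * d_fun \<alpha> \<beta> \<gamma> lam * h_fun \<alpha> \<beta> \<gamma> lam * l_fun \<alpha> \<beta> \<gamma> lam)"

end

(*
  For a diagonal Hessian diag(w_1, ..., w_n) the state matrix A is, up to a permutation, a direct
  sum of 2x2 companion blocks, so its eigenvalues are the roots of z^2 + b(w_i) z + a(w_i).
  Applying the hypothesis to diag(m, lambda, L) therefore shows that for every lambda in [m, L] both
  roots lie in the closed disc of radius rho < 1, and that for some lambda one root has modulus
  exactly rho.  Roots in the unit disc give the Jury conditions d, h, l > 0, so J_hat is continuous
  on [m, L] and attains its extrema.  Since d + l = 2 (1 + a), J_hat = sigma^2 (1 + a) / (d h l),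
  and d l = (1 + a)^2 - b^2 <= (1 + a)^2 together with h (1 + a) = 1 - a^2 <= 1 yields
  J_hat >= sigma^2.  At a lambda with a root of
  modulus rho, a case distinction between real and complex conjugate roots gives
  d h l <= 2 (1 + rho)^2 (1 - rho) (1 + a), which is the bound on the maximum because
  1 - rho = 1 / T_s.
*)
theory Submission
  imports Defs
begin

lemma dim_mat_diag [simp]: "dim_row (mat_diag n f) = n" "dim_col (mat_diag n f) = n"
  unfolding mat_diag_def by auto

lemma index_mat_diag [simp]: "i < n \<Longrightarrow> j < n \<Longrightarrow> mat_diag n f $$ (i, j) = (if i = j then f j else 0)"
  unfolding mat_diag_def by auto

lemma mat_diag_mult_vec_index:
  "i < n \<Longrightarrow> dim_vec x = n \<Longrightarrow> (mat_diag n c *\<^sub>v x) $ i = c i * x $ i"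
  unfolding mat_diag_def mult_mat_vec_def scalar_prod_def
  by (simp add: if_distrib[of "\<lambda>t. t * _"] sum.delta cong: if_cong)

lemma eigenvalue_mat_diag_iff:
  fixes c :: "nat \<Rightarrow> 'a::field"
  shows "eigenvalue (mat_diag n c) k \<longleftrightarrow> (\<exists>i<n. k = c i)"
proof -
  have "upper_triangular (mat_diag n c)"
    unfolding mat_diag_def by auto
  then have "char_poly (mat_diag n c) = (\<Prod>a \<leftarrow> diag_mat (mat_diag n c). [:- a, 1:])"
    by (rule char_poly_upper_triangular[OF mat_diag_dim])
  moreover have "diag_mat (mat_diag n c) = map c [0..<n]"
    unfolding diag_mat_def mat_diag_def by (simp add: list_eq_iff_nth_eq)
  ultimately show ?thesis
    unfolding eigenvalue_root_char_poly[OF mat_diag_dim]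
    by (auto simp: poly_prod_list_zero_iff)
qed

lemma companion_block_mult_append_vec:
  fixes c e :: "nat \<Rightarrow> 'a::semiring_1"
  assumes "x \<in> carrier_vec n" "y \<in> carrier_vec n"
  shows "four_block_mat (0\<^sub>m n n) (1\<^sub>m n) (mat_diag n c) (mat_diag n e) *\<^sub>v (x @\<^sub>v y)
    = y @\<^sub>v vec n (\<lambda>i. c i * x $ i + e i * y $ i)"
proof -
  have "0\<^sub>m n n *\<^sub>v x = 0\<^sub>v n"
    using assms by (auto intro!: eq_vecI)
  then have "0\<^sub>m n n *\<^sub>v x + 1\<^sub>m n *\<^sub>v y = y"
    using assms by simp
  moreover have "mat_diag n c *\<^sub>v x + mat_diag n e *\<^sub>v y = vec n (\<lambda>i. c i * x $ i + e i * y $ i)"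
    using assms by (intro eq_vecI) (simp_all add: mat_diag_mult_vec_index del: index_mult_mat_vec)
  ultimately show ?thesis
    by (subst four_block_mat_mult_vec[OF zero_carrier_mat one_carrier_mat mat_diag_dim mat_diag_dim assms])
      simp
qed

lemma smult_append_vec: "k \<cdot>\<^sub>v (x @\<^sub>v y) = (k \<cdot>\<^sub>v x) @\<^sub>v (k \<cdot>\<^sub>v y)"
  by (auto intro!: eq_vecI)

lemma eigenvalue_companion_block_iff:
  fixes c e :: "nat \<Rightarrow> 'a::field"
  shows "eigenvalue (four_block_mat (0\<^sub>m n n) (1\<^sub>m n) (mat_diag n c) (mat_diag n e)) z
    \<longleftrightarrow> (\<exists>i<n. z\<^sup>2 = c i + e i * z)"
  (is "eigenvalue ?M z \<longleftrightarrow> _")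
proof
  assume "eigenvalue ?M z"
  then obtain v where v: "v \<in> carrier_vec (n + n)" "v \<noteq> 0\<^sub>v (n + n)" "?M *\<^sub>v v = z \<cdot>\<^sub>v v"
    unfolding eigenvalue_def eigenvector_def by auto
  define x where "x = vec_first v n"
  define y where "y = vec_last v n"
  have x: "x \<in> carrier_vec n" and y: "y \<in> carrier_vec n" and v_split: "v = x @\<^sub>v y"
    using v(1) unfolding x_def y_def by auto
  have "y @\<^sub>v vec n (\<lambda>i. c i * x $ i + e i * y $ i) = (z \<cdot>\<^sub>v x) @\<^sub>v (z \<cdot>\<^sub>v y)"
    using v(3) unfolding v_split companion_block_mult_append_vec[OF x y] smult_append_vec .
  then have y_eq: "y = z \<cdot>\<^sub>v x" and top: "vec n (\<lambda>i. c i * x $ i + e i * y $ i) = z \<cdot>\<^sub>v y"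
    using x y by (subst (asm) append_vec_eq; auto)+
  have "x \<noteq> 0\<^sub>v n"
  proof
    assume "x = 0\<^sub>v n"
    then have "v = 0\<^sub>v (n + n)"
      unfolding v_split y_eq by (auto intro!: eq_vecI)
    with v(2) show False ..
  qed
  then obtain i where i: "i < n" "x $ i \<noteq> 0"
    using x by (auto simp: vec_eq_iff)
  have "(c i + e i * z) * x $ i = z\<^sup>2 * x $ i"
    using arg_cong[OF top, of "\<lambda>u. u $ i"] i(1) x
    by (simp add: y_eq power2_eq_square algebra_simps)
  with i show "\<exists>i<n. z\<^sup>2 = c i + e i * z"
    by auto
next
  assume "\<exists>i<n. z\<^sup>2 = c i + e i * z"
  then obtain i where i: "i < n" and root: "z\<^sup>2 = c i + e i * z"
    by blast
  define x :: "'a vec" where "x = unit_vec n i"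
  have x: "x \<in> carrier_vec n"
    unfolding x_def by simp
  have "?M *\<^sub>v (x @\<^sub>v z \<cdot>\<^sub>v x) = z \<cdot>\<^sub>v (x @\<^sub>v z \<cdot>\<^sub>v x)"
    unfolding companion_block_mult_append_vec[OF x smult_carrier_vec[THEN iffD2, OF x]]
      smult_append_vec
    using i root by (auto intro!: eq_vecI simp: x_def power2_eq_square algebra_simps)
  moreover have "(x @\<^sub>v z \<cdot>\<^sub>v x) $ i \<noteq> 0\<^sub>v (n + n) $ i"
    using i by (simp add: x_def)
  ultimately show "eigenvalue ?M z"
    using x unfolding eigenvalue_def eigenvector_def by (auto intro!: exI[of _ "x @\<^sub>v z \<cdot>\<^sub>v x"])
qed

lemma state_matrix_mat_diag:
  "map_mat complex_of_real (state_matrix \<alpha> \<beta> \<gamma> n (mat_diag n w)) =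
    four_block_mat (0\<^sub>m n n) (1\<^sub>m n)
      (mat_diag n (\<lambda>i. - complex_of_real (a_fun \<alpha> \<beta> \<gamma> (w i))))
      (mat_diag n (\<lambda>i. - complex_of_real (b_fun \<alpha> \<beta> \<gamma> (w i))))"
  unfolding state_matrix_def a_fun_def b_fun_def
  by (rule eq_matI) (auto simp: algebra_simps)

lemma spectrum_state_matrix_mat_diag:
  "spectrum (map_mat complex_of_real (state_matrix \<alpha> \<beta> \<gamma> n (mat_diag n w))) =
    {z. \<exists>i<n. z\<^sup>2 + complex_of_real (b_fun \<alpha> \<beta> \<gamma> (w i)) * z
                 + complex_of_real (a_fun \<alpha> \<beta> \<gamma> (w i)) = 0}"
  unfolding spectrum_def state_matrix_mat_diag eigenvalue_companion_block_iff
  by (auto simp: algebra_simps eq_neg_iff_add_eq_0)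

lemma quad_class_hessian_mat_diag:
  assumes "0 < m" and range: "\<forall>i<n. w i \<in> {m..L}"
    and "i < n" "w i = m" and "j < n" "w j = L"
  shows "quad_class_hessian m L n (mat_diag n w)"
proof -
  have "transpose_mat (mat_diag n w) = mat_diag n w"
    by (rule eq_matI) auto
  moreover have "v \<bullet> (mat_diag n w *\<^sub>v v) > 0" if v: "v \<in> carrier_vec n" "v \<noteq> 0\<^sub>v n" for v
  proof -
    obtain k where k: "k < n" "v $ k \<noteq> 0"
      using v by (auto simp: vec_eq_iff)
    have "v \<bullet> (mat_diag n w *\<^sub>v v) = (\<Sum>i<n. w i * (v $ i)\<^sup>2)"
      using v(1) unfolding scalar_prod_def
      by (intro sum.cong) (auto simp: mat_diag_mult_vec_index power2_eq_square lessThan_atLeast0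
                                simp del: index_mult_mat_vec)
    also have "\<dots> > 0"
      using k range \<open>0 < m\<close> by (intro sum_pos2[of _ k]) force+
    finally show ?thesis .
  qed
  moreover have "eigenvalue (mat_diag n w) k \<longleftrightarrow> (\<exists>i<n. k = w i)" for k
    by (rule eigenvalue_mat_diag_iff)
  ultimately show ?thesis
    unfolding quad_class_hessian_def using assms by fastforce
qed

text \<open>The stationary variance of the scalar recursion y(t+2) + b y(t+1) + a y(t) = \<sigma> w(t).\<close>
definition ar2_variance :: "real \<Rightarrow> real \<Rightarrow> real \<Rightarrow> real" where
  "ar2_variance \<sigma> a b = \<sigma>\<^sup>2 * (1 + a) / ((1 + a + b) * (1 - a) * (1 + a - b))"

lemma J_hat_eq_ar2_variance:
  "J_hat \<sigma>w \<alpha> \<beta> \<gamma> lam = ar2_variance \<sigma>w (a_fun \<alpha> \<beta> \<gamma> lam) (b_fun \<alpha> \<beta> \<gamma> lam)"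
proof -
  have "\<sigma>\<^sup>2 * ((a + b + 1) + (a - b + 1)) / (2 * (a + b + 1) * (1 - a) * (a - b + 1))
      = \<sigma>\<^sup>2 * (1 + a) / ((1 + a + b) * (1 - a) * (1 + a - b))" for \<sigma> a b :: real
  proof -
    have "\<sigma>\<^sup>2 * ((a + b + 1) + (a - b + 1)) = 2 * (\<sigma>\<^sup>2 * (1 + a))"
      and "2 * (a + b + 1) * (1 - a) * (a - b + 1) = 2 * ((1 + a + b) * (1 - a) * (1 + a - b))"
      by (simp_all add: algebra_simps)
    then show ?thesis
      by (simp only: mult_divide_mult_cancel_left_if) simp
  qed
  then show ?thesis
    unfolding J_hat_def ar2_variance_def d_fun_def l_fun_def h_fun_def .
qed

lemma ar2_variance_lower_bound:
  assumes "0 < 1 + a + b" "0 < 1 + a - b" "0 < 1 - a" "0 < M"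
    and "(1 + a + b) * (1 - a) * (1 + a - b) \<le> (1 + a) * M"
  shows "\<sigma>\<^sup>2 / M \<le> ar2_variance \<sigma> a b"
proof -
  define P where "P = (1 + a + b) * (1 - a) * (1 + a - b)"
  have "0 < P"
    using assms(1-3) unfolding P_def by simp
  have "\<sigma>\<^sup>2 * P \<le> \<sigma>\<^sup>2 * (1 + a) * M"
    using assms(5) unfolding P_def mult.assoc by (rule mult_left_mono) simp
  then have "\<sigma>\<^sup>2 / M \<le> \<sigma>\<^sup>2 * (1 + a) / P"
    using \<open>0 < P\<close> \<open>0 < M\<close> by (simp add: divide_simps)
  then show ?thesis
    unfolding ar2_variance_def P_def .
qed

lemma ar2_denominator_le:
  fixes a b :: real
  assumes "0 \<le> 1 - a"
  shows "(1 + a + b) * (1 - a) * (1 + a - b) \<le> (1 + a)\<^sup>2 * (1 - a)"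
proof -
  have "(1 + a + b) * (1 + a - b) \<le> (1 + a)\<^sup>2"
    by (simp add: power2_eq_square algebra_simps)
  then have "((1 + a + b) * (1 + a - b)) * (1 - a) \<le> (1 + a)\<^sup>2 * (1 - a)"
    using assms by (rule mult_right_mono)
  then show ?thesis
    by (simp add: ac_simps)
qed

lemma ar2_variance_ge_noise:
  assumes "0 < 1 + a + b" "0 < 1 + a - b" "0 < 1 - a"
  shows "\<sigma>\<^sup>2 \<le> ar2_variance \<sigma> a b"
proof -
  have "(1 + a + b) * (1 - a) * (1 + a - b) \<le> (1 + a)\<^sup>2 * (1 - a)"
    using assms(3) by (intro ar2_denominator_le) simp
  also have "\<dots> = (1 + a) * 1 - (1 + a) * a\<^sup>2"
    by (simp add: power2_eq_square algebra_simps)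
  also have "\<dots> \<le> (1 + a) * 1"
    using assms(1,2) by simp
  finally show ?thesis
    using ar2_variance_lower_bound[OF assms, of 1] by simp
qed

lemma real_monic_quadratic_cases:
  fixes a b :: real
  obtains (real) r s where "a = r * s" "b = - (r + s)"
  | (conjugate) u v where "a = u\<^sup>2 + v\<^sup>2" "b = - 2 * u"
proof (cases "4 * a \<le> b\<^sup>2")
  case True
  define s where "s = sqrt (b\<^sup>2 - 4 * a)"
  have "s\<^sup>2 = b\<^sup>2 - 4 * a"
    using True unfolding s_def by simp
  then show ?thesis
    by (intro real[of "(- b + s) / 2" "(- b - s) / 2"]) (simp_all add: field_simps power2_eq_square)
next
  case False
  define v where "v = sqrt (a - b\<^sup>2 / 4)"
  have "v\<^sup>2 = a - b\<^sup>2 / 4"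
    using False unfolding v_def by simp
  then show ?thesis
    by (intro conjugate[of "- b / 2" v]) (simp_all add: field_simps power2_eq_square)
qed

lemma complex_of_real_quadratic_root:
  fixes a b x :: real
  assumes "x\<^sup>2 + b * x + a = 0"
  shows "(complex_of_real x)\<^sup>2 + complex_of_real b * complex_of_real x + complex_of_real a = 0"
  using arg_cong[OF assms, of complex_of_real] by simp

lemma conjugate_quadratic_root:
  fixes u v :: real
  shows "(Complex u v)\<^sup>2 + complex_of_real (- 2 * u) * Complex u v + complex_of_real (u\<^sup>2 + v\<^sup>2) = 0"
  by (simp add: complex_eq_iff power2_eq_square)

lemma jury_conditions_if_roots_in_disc:
  fixes a b \<rho> :: real
  assumes roots: "\<And>z. z\<^sup>2 + complex_of_real b * z + complex_of_real a = 0 \<Longrightarrow> cmod z \<le> \<rho>"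
    and "\<rho> < 1"
  shows "0 < 1 + a + b" "0 < 1 + a - b" "0 < 1 - a"
proof -
  have "0 < 1 + a + b \<and> 0 < 1 + a - b \<and> 0 < 1 - a"
  proof (cases a b rule: real_monic_quadratic_cases)
    case (real r s)
    have "\<bar>x\<bar> < 1" if "x = r \<or> x = s" for x
      using roots[OF complex_of_real_quadratic_root[of x b a]] that \<open>\<rho> < 1\<close> real
      by (auto simp: power2_eq_square algebra_simps)
    then have "\<bar>r\<bar> < 1" "\<bar>s\<bar> < 1"
      by auto
    moreover have "\<bar>r * s\<bar> < 1"
    proof -
      have "\<bar>r\<bar> * \<bar>s\<bar> \<le> \<bar>r\<bar>"
        using \<open>\<bar>s\<bar> < 1\<close> by (simp add: mult_left_le)
      then show ?thesis
        using \<open>\<bar>r\<bar> < 1\<close> by (simp add: abs_mult)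
    qed
    moreover have "1 + a + b = (1 - r) * (1 - s)" "1 + a - b = (1 + r) * (1 + s)"
      unfolding real by (simp_all add: algebra_simps)
    moreover have "0 < (1 - r) * (1 - s)" "0 < (1 + r) * (1 + s)"
      using \<open>\<bar>r\<bar> < 1\<close> \<open>\<bar>s\<bar> < 1\<close> by (intro mult_pos_pos; simp add: abs_less_iff)+
    moreover have "0 < 1 - r * s"
      using \<open>\<bar>r * s\<bar> < 1\<close> by linarith
    ultimately show ?thesis
      unfolding real(1) by linarith
  next
    case (conjugate u v)
    have "sqrt (u\<^sup>2 + v\<^sup>2) \<le> \<rho>"
      using roots[of "Complex u v"] conjugate_quadratic_root[of u v] unfolding conjugate
      by (simp add: cmod_def)
    then have "sqrt (u\<^sup>2 + v\<^sup>2) < 1"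
      using \<open>\<rho> < 1\<close> by linarith
    then have "u\<^sup>2 + v\<^sup>2 < 1"
      by simp
    then have "u\<^sup>2 < 1"
      using zero_le_power2[of v] by linarith
    then have "0 < (1 - u)\<^sup>2 + v\<^sup>2" "0 < (1 + u)\<^sup>2 + v\<^sup>2"
      by (auto simp: abs_square_less_1 add_pos_nonneg)
    moreover have "1 + a + b = (1 - u)\<^sup>2 + v\<^sup>2" "1 + a - b = (1 + u)\<^sup>2 + v\<^sup>2"
      unfolding conjugate by (simp_all add: power2_eq_square algebra_simps)
    ultimately show ?thesis
      using \<open>u\<^sup>2 + v\<^sup>2 < 1\<close> conjugate(1) by linarith
  qed
  then show "0 < 1 + a + b" "0 < 1 + a - b" "0 < 1 - a"
    by auto
qed

lemma ar2_denominator_le_of_real_roots: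
  fixes r s \<rho> :: real
  assumes "\<bar>r\<bar> = \<rho>" "\<bar>s\<bar> \<le> \<rho>" "\<rho> < 1"
  shows "(1 - r) * (1 - s) * (1 - r * s) * ((1 + r) * (1 + s))
    \<le> (1 + r * s) * (2 * (1 + \<rho>)\<^sup>2 * (1 - \<rho>))"
proof -
  define t where "t = \<bar>s\<bar>"
  have t: "0 \<le> t" "t \<le> \<rho>"
    using assms(2) unfolding t_def by auto
  have "\<bar>r * s\<bar> = \<rho> * t"
    using assms(1) unfolding t_def by (simp add: abs_mult)
  then have rs: "- (\<rho> * t) \<le> r * s"
    by linarith
  have "\<rho> * t \<le> t" "\<rho> * t \<le> 1"
    using t assms(3) by (auto intro: mult_left_le_one_le order.trans[OF mult_left_le_one_le])
  have "t\<^sup>2 \<le> 1"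
    using t assms(3) by (simp add: power_le_one)
  then have "(1 - t\<^sup>2) * (1 - r * s) \<le> (1 - t\<^sup>2) * (1 + \<rho> * t)"
    using rs by (intro mult_left_mono) auto
  also have "\<dots> = ((1 - t) * (1 + t)) * (1 + \<rho> * t)"
    by (simp add: power2_eq_square algebra_simps)
  also have "\<dots> \<le> ((1 - \<rho> * t) * (1 + \<rho>)) * 2"
    using \<open>\<rho> * t \<le> t\<close> \<open>\<rho> * t \<le> 1\<close> t by (intro mult_mono) auto
  also have "\<dots> = 2 * (1 + \<rho>) * (1 - \<rho> * t)"
    by simp
  also have "\<dots> \<le> 2 * (1 + \<rho>) * (1 + r * s)"
    using rs t by (intro mult_left_mono) auto
  finally have core: "(1 - t\<^sup>2) * (1 - r * s) \<le> 2 * (1 + \<rho>) * (1 + r * s)" .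
  have "r\<^sup>2 = \<rho>\<^sup>2" "s\<^sup>2 = t\<^sup>2"
    using assms(1) unfolding t_def by (metis power2_abs)+
  have "(1 - r) * (1 - s) * (1 - r * s) * ((1 + r) * (1 + s))
      = (1 - r\<^sup>2) * ((1 - s\<^sup>2) * (1 - r * s))"
    by (simp add: power2_eq_square algebra_simps)
  also have "\<dots> = (1 - \<rho>\<^sup>2) * ((1 - t\<^sup>2) * (1 - r * s))"
    unfolding \<open>r\<^sup>2 = \<rho>\<^sup>2\<close> \<open>s\<^sup>2 = t\<^sup>2\<close> ..
  also have "\<dots> \<le> (1 - \<rho>\<^sup>2) * (2 * (1 + \<rho>) * (1 + r * s))"
    using core t assms(3) by (intro mult_left_mono) (auto simp: power_le_one)
  also have "\<dots> = (1 + r * s) * (2 * (1 + \<rho>)\<^sup>2 * (1 - \<rho>))"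
    by (simp add: power2_eq_square algebra_simps)
  finally show ?thesis .
qed

lemma ar2_variance_ge_of_extremal_root:
  fixes a b \<rho> :: real and z :: complex
  assumes roots: "\<And>z. z\<^sup>2 + complex_of_real b * z + complex_of_real a = 0 \<Longrightarrow> cmod z \<le> \<rho>"
    and "\<rho> < 1"
    and root: "z\<^sup>2 + complex_of_real b * z + complex_of_real a = 0" and "cmod z = \<rho>"
  shows "\<sigma>\<^sup>2 / (2 * (1 + \<rho>)\<^sup>2 * (1 - \<rho>)) \<le> ar2_variance \<sigma> a b"
proof (rule ar2_variance_lower_bound)
  show "0 < 1 + a + b" "0 < 1 + a - b" "0 < 1 - a"
    using jury_conditions_if_roots_in_disc[OF roots \<open>\<rho> < 1\<close>] by auto
  show "0 < 2 * (1 + \<rho>)\<^sup>2 * (1 - \<rho>)"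
    using \<open>cmod z = \<rho>\<close> \<open>\<rho> < 1\<close> norm_ge_zero[of z] by simp
  show "(1 + a + b) * (1 - a) * (1 + a - b) \<le> (1 + a) * (2 * (1 + \<rho>)\<^sup>2 * (1 - \<rho>))"
  proof (cases a b rule: real_monic_quadratic_cases)
    case (real r s)
    have "(z - complex_of_real r) * (z - complex_of_real s) = 0"
      using root unfolding real by (simp add: power2_eq_square algebra_simps)
    then have "\<bar>r\<bar> = \<rho> \<or> \<bar>s\<bar> = \<rho>"
      using \<open>cmod z = \<rho>\<close> by auto
    moreover have "\<bar>x\<bar> \<le> \<rho>" if "x = r \<or> x = s" for x
      using roots[OF complex_of_real_quadratic_root[of x b a]] that real
      by (auto simp: power2_eq_square algebra_simps)
    ultimately obtain x y where xy: "a = x * y" "b = - (x + y)" "\<bar>x\<bar> = \<rho>" "\<bar>y\<bar> \<le> \<rho>"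
      using real by (metis add.commute mult.commute)
    have "(1 + a + b) * (1 - a) * (1 + a - b) = (1 - x) * (1 - y) * (1 - x * y) * ((1 + x) * (1 + y))"
      unfolding xy by (simp add: algebra_simps)
    also have "\<dots> \<le> (1 + a) * (2 * (1 + \<rho>)\<^sup>2 * (1 - \<rho>))"
      unfolding xy(1) using xy(3,4) \<open>\<rho> < 1\<close> by (rule ar2_denominator_le_of_real_roots)
    finally show ?thesis .
  next
    case (conjugate u v)
    have "(z - Complex u v) * (z - Complex u (- v)) = 0"
      using root unfolding conjugate by (simp add: complex_eq_iff power2_eq_square algebra_simps)
    then have "cmod z = sqrt a"
      unfolding conjugate by (auto simp: cmod_def)
    then have "a = \<rho>\<^sup>2"
      using \<open>cmod z = \<rho>\<close> conjugate(1) by auto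
    have "(1 + a + b) * (1 - a) * (1 + a - b) \<le> (1 + a) * ((1 + \<rho>\<^sup>2) * (1 - \<rho>\<^sup>2))"
      using ar2_denominator_le[of a b] \<open>0 < 1 - a\<close>
      unfolding \<open>a = \<rho>\<^sup>2\<close> by (simp add: power2_eq_square algebra_simps)
    also have "\<dots> \<le> (1 + a) * (2 * (1 + \<rho>)\<^sup>2 * (1 - \<rho>))"
    proof (rule mult_left_mono)
      have "1 + \<rho>\<^sup>2 \<le> 2 * (1 + \<rho>)"
        using \<open>0 < 1 - a\<close> \<open>a = \<rho>\<^sup>2\<close> \<open>cmod z = \<rho>\<close> norm_ge_zero[of z] by (smt (verit))
      then have "(1 + \<rho>\<^sup>2) * ((1 + \<rho>) * (1 - \<rho>)) \<le> 2 * (1 + \<rho>) * ((1 + \<rho>) * (1 - \<rho>))"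
        using \<open>0 < 2 * (1 + \<rho>)\<^sup>2 * (1 - \<rho>)\<close> \<open>\<rho> < 1\<close> \<open>cmod z = \<rho>\<close>
        by (intro mult_right_mono) auto
      then show "(1 + \<rho>\<^sup>2) * (1 - \<rho>\<^sup>2) \<le> 2 * (1 + \<rho>)\<^sup>2 * (1 - \<rho>)"
        by (simp add: power2_eq_square algebra_simps)
    qed (use \<open>0 < 1 + a + b\<close> \<open>0 < 1 + a - b\<close> in simp)
    finally show ?thesis .
  qed
qed

lemma momentum_root_moduli:
  assumes "0 < m" "m \<le> L"
    and spectral_radius: "\<And>n Q. quad_class_hessian m L n Q \<Longrightarrow>
           spectral_radius (map_mat complex_of_real (state_matrix \<alpha> \<beta> \<gamma> n Q)) = \<rho>"
  shows "\<And>lam z. lam \<in> {m..L} \<Longrightarrow>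
      z\<^sup>2 + complex_of_real (b_fun \<alpha> \<beta> \<gamma> lam) * z + complex_of_real (a_fun \<alpha> \<beta> \<gamma> lam) = 0 \<Longrightarrow>
      cmod z \<le> \<rho>"
    and "\<exists>lam\<in>{m..L}. \<exists>z. z\<^sup>2 + complex_of_real (b_fun \<alpha> \<beta> \<gamma> lam) * z
                               + complex_of_real (a_fun \<alpha> \<beta> \<gamma> lam) = 0 \<and> cmod z = \<rho>"
proof -
  define w where "w lam = (\<lambda>i::nat. if i = 0 then m else if i = 1 then lam else L)" for lam
  define A where "A lam = map_mat complex_of_real (state_matrix \<alpha> \<beta> \<gamma> 3 (mat_diag 3 (w lam)))" for lam
  have A_carrier: "A lam \<in> carrier_mat 6 6" for lam
    unfolding A_def state_matrix_def by auto
  have A_spectrum: "spectrum (A lam) = {z. \<exists>i<3. z\<^sup>2 + complex_of_real (b_fun \<alpha> \<beta> \<gamma> (w lam i)) * z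
                                         + complex_of_real (a_fun \<alpha> \<beta> \<gamma> (w lam i)) = 0}" for lam
    unfolding A_def by (rule spectrum_state_matrix_mat_diag)
  have radius: "spectral_radius (A lam) = \<rho>" if "lam \<in> {m..L}" for lam
    unfolding A_def using that assms(1,2)
    by (intro spectral_radius quad_class_hessian_mat_diag[where i = 0 and j = 2]) (auto simp: w_def)
  show "cmod z \<le> \<rho>" if "lam \<in> {m..L}"
      "z\<^sup>2 + complex_of_real (b_fun \<alpha> \<beta> \<gamma> lam) * z + complex_of_real (a_fun \<alpha> \<beta> \<gamma> lam) = 0" for lam z
  proof -
    have "cmod z \<in> cmod ` spectrum (A lam)"
      using that(2) unfolding A_spectrum by (force simp: w_def)
    from spectral_radius_mem_max(2)[OF A_carrier zero_less_numeral this]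
    show ?thesis
      using radius[OF that(1)] by simp
  qed
  have "m \<in> {m..L}"
    using assms(2) by simp
  then have "\<rho> \<in> cmod ` spectrum (A m)"
    using spectral_radius_mem_max(1)[OF A_carrier zero_less_numeral] radius by metis
  then obtain i z where "i < 3" "cmod z = \<rho>"
      "z\<^sup>2 + complex_of_real (b_fun \<alpha> \<beta> \<gamma> (w m i)) * z + complex_of_real (a_fun \<alpha> \<beta> \<gamma> (w m i)) = 0"
    unfolding A_spectrum by auto
  moreover have "w m i \<in> {m..L}"
    using assms(2) by (simp add: w_def)
  ultimately show "\<exists>lam\<in>{m..L}. \<exists>z. z\<^sup>2 + complex_of_real (b_fun \<alpha> \<beta> \<gamma> lam) * z
                               + complex_of_real (a_fun \<alpha> \<beta> \<gamma> lam) = 0 \<and> cmod z = \<rho>"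
    by blast
qed

lemma J_hat_attains_extrema:
  assumes "m \<le> L"
    and "\<And>lam. lam \<in> {m..L} \<Longrightarrow> 0 < 1 + a_fun \<alpha> \<beta> \<gamma> lam + b_fun \<alpha> \<beta> \<gamma> lam"
    and "\<And>lam. lam \<in> {m..L} \<Longrightarrow> 0 < 1 + a_fun \<alpha> \<beta> \<gamma> lam - b_fun \<alpha> \<beta> \<gamma> lam"
    and "\<And>lam. lam \<in> {m..L} \<Longrightarrow> 0 < 1 - a_fun \<alpha> \<beta> \<gamma> lam"
  obtains lam_max lam_min where
    "lam_max \<in> {m..L}" "\<forall>mu\<in>{m..L}. J_hat \<sigma>w \<alpha> \<beta> \<gamma> mu \<le> J_hat \<sigma>w \<alpha> \<beta> \<gamma> lam_max"
    "lam_min \<in> {m..L}" "\<forall>mu\<in>{m..L}. J_hat \<sigma>w \<alpha> \<beta> \<gamma> lam_min \<le> J_hat \<sigma>w \<alpha> \<beta> \<gamma> mu"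
proof -
  have continuous: "continuous_on {m..L} (J_hat \<sigma>w \<alpha> \<beta> \<gamma>)"
    unfolding J_hat_eq_ar2_variance[abs_def] ar2_variance_def
    using assms(2-4) unfolding a_fun_def b_fun_def by (intro continuous_intros) force
  have nonempty: "{m..L} \<noteq> {}"
    using assms(1) by simp
  show ?thesis
    using continuous_attains_sup[OF compact_Icc nonempty continuous]
      continuous_attains_inf[OF compact_Icc nonempty continuous] that
    by blast
qed

theorem proposition6:
  fixes m L \<alpha> \<beta> \<gamma> \<sigma>w Ts \<rho> :: real
  assumes "0 < m" and "m \<le> L"
    and "\<sigma>w \<ge> 0"
    and "\<rho> = 1 - 1 / Ts" and "0 < \<rho>" and "\<rho> < 1"
    and "\<And>n Q. quad_class_hessian m L n Q \<Longrightarrow>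
           spectral_radius (map_mat complex_of_real (state_matrix \<alpha> \<beta> \<gamma> n Q)) = \<rho>"
  shows "(\<exists>lam\<in>{m..L}. (\<forall>mu\<in>{m..L}. J_hat \<sigma>w \<alpha> \<beta> \<gamma> mu \<le> J_hat \<sigma>w \<alpha> \<beta> \<gamma> lam) \<and>
             J_hat \<sigma>w \<alpha> \<beta> \<gamma> lam \<ge> \<sigma>w\<^sup>2 / (2 * (1 + \<rho>)\<^sup>2) * Ts)
       \<and> (\<exists>lam\<in>{m..L}. (\<forall>mu\<in>{m..L}. J_hat \<sigma>w \<alpha> \<beta> \<gamma> lam \<le> J_hat \<sigma>w \<alpha> \<beta> \<gamma> mu) \<and>
             J_hat \<sigma>w \<alpha> \<beta> \<gamma> lam \<ge> \<sigma>w\<^sup>2)"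
proof -
  have roots: "cmod z \<le> \<rho>" if "lam \<in> {m..L}"
    "z\<^sup>2 + complex_of_real (b_fun \<alpha> \<beta> \<gamma> lam) * z + complex_of_real (a_fun \<alpha> \<beta> \<gamma> lam) = 0" for lam z
    using assms(1,2,7) that by (rule momentum_root_moduli)
  obtain lam z where lam: "lam \<in> {m..L}" and "cmod z = \<rho>"
    and root: "z\<^sup>2 + complex_of_real (b_fun \<alpha> \<beta> \<gamma> lam) * z + complex_of_real (a_fun \<alpha> \<beta> \<gamma> lam) = 0"
    using momentum_root_moduli(2)[OF assms(1,2)] assms(7) by blast
  have jury: "0 < 1 + a_fun \<alpha> \<beta> \<gamma> lam + b_fun \<alpha> \<beta> \<gamma> lam"
      "0 < 1 + a_fun \<alpha> \<beta> \<gamma> lam - b_fun \<alpha> \<beta> \<gamma> lam" "0 < 1 - a_fun \<alpha> \<beta> \<gamma> lam"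
    if "lam \<in> {m..L}" for lam
    using jury_conditions_if_roots_in_disc[OF roots[OF that] \<open>\<rho> < 1\<close>] by auto
  obtain lam_max lam_min where
    "lam_max \<in> {m..L}" and max: "\<forall>mu\<in>{m..L}. J_hat \<sigma>w \<alpha> \<beta> \<gamma> mu \<le> J_hat \<sigma>w \<alpha> \<beta> \<gamma> lam_max"
    and "lam_min \<in> {m..L}" and min: "\<forall>mu\<in>{m..L}. J_hat \<sigma>w \<alpha> \<beta> \<gamma> lam_min \<le> J_hat \<sigma>w \<alpha> \<beta> \<gamma> mu"
    using \<open>m \<le> L\<close> jury by (rule J_hat_attains_extrema)
  have "Ts = 1 / (1 - \<rho>)"
    using \<open>\<rho> = 1 - 1 / Ts\<close> by simp
  then have "\<sigma>w\<^sup>2 / (2 * (1 + \<rho>)\<^sup>2) * Ts \<le> J_hat \<sigma>w \<alpha> \<beta> \<gamma> lam"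
    using ar2_variance_ge_of_extremal_root[OF roots[OF lam] \<open>\<rho> < 1\<close> root \<open>cmod z = \<rho>\<close>]
    unfolding J_hat_eq_ar2_variance by simp
  also have "\<dots> \<le> J_hat \<sigma>w \<alpha> \<beta> \<gamma> lam_max"
    using max lam by blast
  finally have "\<sigma>w\<^sup>2 / (2 * (1 + \<rho>)\<^sup>2) * Ts \<le> J_hat \<sigma>w \<alpha> \<beta> \<gamma> lam_max" .
  moreover have "\<sigma>w\<^sup>2 \<le> J_hat \<sigma>w \<alpha> \<beta> \<gamma> lam_min"
    unfolding J_hat_eq_ar2_variance using jury[OF \<open>lam_min \<in> {m..L}\<close>] by (rule ar2_variance_ge_noise)
  ultimately show ?thesis
    using \<open>lam_max \<in> {m..L}\<close> max \<open>lam_min \<in> {m..L}\<close> min by blast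
qed

end
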